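(* Let $m\le n/\log^2 n$ be a positive integer and consider the Move-to-the-Back Dealer $\mathcal D_m$ with parameters $k_1=n/(8e\log n)$, $\ell=m\log n$, $u=\ell$, $d=(k_1-2m\log n)/\ell$, and $k_i=k_1-(i-1)\ell$. For every Guesser with $m$ bits of memory and every epoch $i\in[d]$, the expected number $c_i$ of correct guesses during the $i$-th epoch satisfies $$c_i\le \frac{r_i}{k_i-\ell-u},$$ where $r_i$ is the expected number of reasonable guesses during the $i$-th epoch.
   Context: Card guessing game: a deck of $n$ distinct cards labeled $1,\dots,n$; $n$ turns; in each turn the Dealer selects a card from the remaining deck and places it face down, the Guesser names a card of $[n]$, and the card is revealed and discarded. A guess is correct if it equals the drawn card. A Guesser with $m$ bits of memory keeps a state in $\{0,1\}^m$ between turns and consists of a (possibly randomized) guessing function (state $\mapsto$ guess) and a (possibly randomized) state-transition function (state and revealed card $\mapsto$ new state); she may use unlimited randomness and computation. The Dealer $\mathcal D_m$ (rounding ignored): (1) while more than $k_1$ cards remain, it draws a uniformly random card of the remaining deck; (2) for $i=1,\dots,d$, the $i$-th epoch consists of the $\ell$ turns starting when $k_i$ cards remain; at the start of each epoch a set $B$ is set to $\emptyset$; in each turn of the epoch the Dealer draws a uniformly random card of (remaining deck)$\setminus B$, and after the Guesser's guess $g$ in that turn, if $g$ is still in the remaining deck and $|B|<u$, then $g$ is added to $B$; (3) when $2m\log n$ cards remain, it draws uniformly random cards from the remaining deck until the end. A guess during an epoch is reasonable if it is a card of (remaining deck)$\setminus B$ at that turn. Expectations are over the randomness of both players. $\log$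 is base 2. *)

theory Defs
  imports "HOL-Probability.Probability"
begin

definition k1 :: "nat \<Rightarrow> nat" where
  "k1 n = nat \<lfloor>real n / (8 * exp 1 * log 2 (real n))\<rfloor>"

definition ell :: "nat \<Rightarrow> nat \<Rightarrow> nat" where
  "ell n m = nat \<lfloor>real m * log 2 (real n)\<rfloor>"

definition uu :: "nat \<Rightarrow> nat \<Rightarrow> nat" where
  "uu n m = ell n m"

definition dd :: "nat \<Rightarrow> nat \<Rightarrow> nat" where
  "dd n m = nat \<lfloor>(real (k1 n) - 2 * real m * log 2 (real n)) / real (ell n m)\<rfloor>"

definition kk :: "nat \<Rightarrow> nat \<Rightarrow> nat \<Rightarrow> nat" where
  "kk n m i = k1 n - (i - 1) * ell n m"

text \<open>The turn at which r cards remain belongs to epoch i.\<close>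
definition in_epoch :: "nat \<Rightarrow> nat \<Rightarrow> nat \<Rightarrow> nat \<Rightarrow> bool" where
  "in_epoch n m i r \<longleftrightarrow> 1 \<le> i \<and> i \<le> dd n m \<and> kk n m i - ell n m < r \<and> r \<le> kk n m i"

definition epoch_turn :: "nat \<Rightarrow> nat \<Rightarrow> nat \<Rightarrow> bool" where
  "epoch_turn n m r \<longleftrightarrow> (\<exists>i. in_epoch n m i r)"

definition epoch_start :: "nat \<Rightarrow> nat \<Rightarrow> nat \<Rightarrow> bool" where
  "epoch_start n m r \<longleftrightarrow> (\<exists>i. 1 \<le> i \<and> i \<le> dd n m \<and> r = kk n m i)"

text \<open>Game configuration: (remaining deck, set B, Guesser memory, history).
  The history records, per turn, (cards remaining, guess, drawn card, guess reasonable).\<close>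
type_synonym config = "nat set \<times> nat set \<times> bool list \<times> (nat \<times> nat \<times> nat \<times> bool) list"

definition step :: "nat \<Rightarrow> nat \<Rightarrow> (bool list \<Rightarrow> nat pmf) \<Rightarrow> (bool list \<Rightarrow> nat \<Rightarrow> bool list pmf)
    \<Rightarrow> config \<Rightarrow> config pmf" where
  "step n m G T cf = (case cf of (D, B, s, h) \<Rightarrow>
     (let B0 = (if epoch_start n m (card D) then {} else B);
          ep = epoch_turn n m (card D)
      in do {
        c \<leftarrow> (if ep then pmf_of_set (D - B0) else pmf_of_set D);
        g \<leftarrow> G s;
        s' \<leftarrow> T s c;
        return_pmf (D - {c},
                    (if ep \<and> g \<in> D - {c} \<and> card B0 < uu n m then insert g B0 else B0),
                    s',
                    h @ [(card D, g, c, ep \<and> g \<in> D - B0)])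
      }))"

definition game :: "nat \<Rightarrow> nat \<Rightarrow> (bool list \<Rightarrow> nat pmf) \<Rightarrow> (bool list \<Rightarrow> nat \<Rightarrow> bool list pmf)
    \<Rightarrow> bool list \<Rightarrow> config pmf" where
  "game n m G T s0 = ((\<lambda>p. bind_pmf p (step n m G T)) ^^ n) (return_pmf ({1..n}, {}, s0, []))"

definition correct_exp :: "nat \<Rightarrow> nat \<Rightarrow> (bool list \<Rightarrow> nat pmf) \<Rightarrow> (bool list \<Rightarrow> nat \<Rightarrow> bool list pmf)
    \<Rightarrow> bool list \<Rightarrow> nat \<Rightarrow> real" where
  "correct_exp n m G T s0 i = measure_pmf.expectation (game n m G T s0)
     (\<lambda>(D, B, s, h). real (length (filter (\<lambda>(r, g, c, rs). in_epoch n m i r \<and> g = c) h)))"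

definition reasonable_exp :: "nat \<Rightarrow> nat \<Rightarrow> (bool list \<Rightarrow> nat pmf) \<Rightarrow> (bool list \<Rightarrow> nat \<Rightarrow> bool list pmf)
    \<Rightarrow> bool list \<Rightarrow> nat \<Rightarrow> real" where
  "reasonable_exp n m G T s0 i = measure_pmf.expectation (game n m G T s0)
     (\<lambda>(D, B, s, h). real (length (filter (\<lambda>(r, g, c, rs). in_epoch n m i r \<and> rs) h)))"

end

theory Submission
  imports Defs
begin

text \<open>In a turn of epoch i the Dealer draws uniformly from the pool S = (remaining deck) - B,
  which has more than k_i - l - u cards: at least k_i - l + 1 cards remain and |B| <= u.
  Whatever the Guesser's state, a guess drawn from her distribution p is correct with probability
  p(S) / |S| and reasonable with probability p(S). So in every turn, conditionally on the past,
  the probability of a correct guess is at most that of a reasonable guess divided by k_i - l - u,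
  and linearity of expectation sums this over the turns. Neither the memory bound nor the range
  of m enters; only 1 <= i <= d is used, which forces k_i >= 3 l and hence k_i - l - u > 0.\<close>

lemma ell_pos: "0 < dd n m \<Longrightarrow> 0 < ell n m"
  by (cases "ell n m = 0") (simp_all add: dd_def)

lemma three_ell_le_kk:
  assumes "1 \<le> i" "i \<le> dd n m"
  shows "3 * ell n m \<le> kk n m i"
proof -
  define L where "L = real m * log 2 (real n)"
  have ell: "0 < ell n m" using assms ell_pos by simp
  have ell_le: "real (ell n m) \<le> L" using ell unfolding ell_def L_def by linarith
  have "real (dd n m) \<le> (real (k1 n) - 2 * L) / real (ell n m)"
    using assms unfolding dd_def L_def by (simp add: mult.assoc) linarith
  then have "real (dd n m) * real (ell n m) \<le> real (k1 n) - 2 * L"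
    using ell by (simp add: le_divide_eq)
  moreover have "real i * real (ell n m) \<le> real (dd n m) * real (ell n m)"
    using assms by (simp add: mult_right_mono)
  ultimately have "real (i * ell n m + 2 * ell n m) \<le> real (k1 n)"
    using ell_le by simp
  moreover have "i * ell n m = (i - 1) * ell n m + ell n m"
    using assms by (cases i) auto
  ultimately show ?thesis unfolding kk_def by linarith
qed

lemma set_pmf_funpow_bind_pmf_invariant:
  assumes "\<And>x. x \<in> set_pmf p \<Longrightarrow> I 0 x"
    and "\<And>t x y. I t x \<Longrightarrow> y \<in> set_pmf (f x) \<Longrightarrow> I (Suc t) y"
  shows "x \<in> set_pmf (((\<lambda>q. bind_pmf q f) ^^ t) p) \<Longrightarrow> I t x"
  by (induction t arbitrary: x) (auto intro: assms)

lemma nn_integral_funpow_bind_pmf_cmult_le: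
  fixes f :: "'a \<Rightarrow> 'a pmf" and F G a b :: "'a \<Rightarrow> ennreal"
  assumes F: "\<And>x. (\<integral>\<^sup>+y. F y \<partial>f x) = F x + a x"
    and G: "\<And>x. (\<integral>\<^sup>+y. G y \<partial>f x) = G x + b x"
    and increment: "\<And>t x. x \<in> set_pmf (((\<lambda>q. bind_pmf q f) ^^ t) p) \<Longrightarrow> c * a x \<le> b x"
    and init: "c * (\<integral>\<^sup>+x. F x \<partial>p) \<le> (\<integral>\<^sup>+x. G x \<partial>p)"
  shows "c * (\<integral>\<^sup>+x. F x \<partial>((\<lambda>q. bind_pmf q f) ^^ t) p)
           \<le> (\<integral>\<^sup>+x. G x \<partial>((\<lambda>q. bind_pmf q f) ^^ t) p)"
proof (induction t)
  case 0
  then show ?case using init by simp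
next
  case (Suc t)
  let ?p = "((\<lambda>q. bind_pmf q f) ^^ t) p"
  have "(\<integral>\<^sup>+x. c * a x \<partial>?p) \<le> (\<integral>\<^sup>+x. b x \<partial>?p)"
    using increment by (intro nn_integral_mono_AE) (auto simp: AE_measure_pmf_iff)
  then have increment_exp: "c * (\<integral>\<^sup>+x. a x \<partial>?p) \<le> (\<integral>\<^sup>+x. b x \<partial>?p)"
    by (simp add: nn_integral_cmult)
  have "c * (\<integral>\<^sup>+x. F x \<partial>((\<lambda>q. bind_pmf q f) ^^ Suc t) p)
          = c * (\<integral>\<^sup>+x. F x \<partial>?p) + c * (\<integral>\<^sup>+x. a x \<partial>?p)"
    by (simp add: nn_integral_bind_pmf F nn_integral_add distrib_left)
  also have "\<dots> \<le> (\<integral>\<^sup>+x. G x \<partial>?p) + (\<integral>\<^sup>+x. b x \<partial>?p)"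
    using Suc.IH increment_exp by (rule add_mono)
  also have "\<dots> = (\<integral>\<^sup>+x. G x \<partial>((\<lambda>q. bind_pmf q f) ^^ Suc t) p)"
    by (simp add: nn_integral_bind_pmf G nn_integral_add)
  finally show ?case .
qed

lemma card_mult_nn_integral_pmf_pmf_of_set:
  assumes "finite S" "S \<noteq> {}"
  shows "of_nat (card S) * (\<integral>\<^sup>+c. pmf p c \<partial>pmf_of_set S) = emeasure (measure_pmf p) S"
  using assms
  by (simp add: nn_integral_pmf_of_set emeasure_measure_pmf_finite ennreal_times_divide
      mult.commute[of "of_nat (card S)"] mult_divide_eq_ennreal)

definition current_B :: "nat \<Rightarrow> nat \<Rightarrow> nat set \<Rightarrow> nat set \<Rightarrow> nat set" where
  "current_B n m D B = (if epoch_start n m (card D) then {} else B)"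

definition draw_pool :: "nat \<Rightarrow> nat \<Rightarrow> nat set \<Rightarrow> nat set \<Rightarrow> nat set" where
  "draw_pool n m D B = (if epoch_turn n m (card D) then D - current_B n m D B else D)"

definition hist_count :: "(nat \<times> nat \<times> nat \<times> bool \<Rightarrow> bool) \<Rightarrow> config \<Rightarrow> ennreal" where
  "hist_count P = (\<lambda>(D, B, s, h). of_nat (length (filter P h)))"

definition next_entry_prob :: "nat \<Rightarrow> nat \<Rightarrow> (bool list \<Rightarrow> nat pmf)
    \<Rightarrow> (nat \<times> nat \<times> nat \<times> bool \<Rightarrow> bool) \<Rightarrow> config \<Rightarrow> ennreal" where
  "next_entry_prob n m G P = (\<lambda>(D, B, s, h).
     \<integral>\<^sup>+c. \<integral>\<^sup>+g. of_bool (P (card D, g, c, epoch_turn n m (card D) \<and> g \<in> D - current_B n m D B))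
       \<partial>G s \<partial>pmf_of_set (draw_pool n m D B))"

definition correct_in :: "nat \<Rightarrow> nat \<Rightarrow> nat \<Rightarrow> nat \<times> nat \<times> nat \<times> bool \<Rightarrow> bool" where
  "correct_in n m i = (\<lambda>(r, g, c, rs). in_epoch n m i r \<and> g = c)"

definition reasonable_in :: "nat \<Rightarrow> nat \<Rightarrow> nat \<Rightarrow> nat \<times> nat \<times> nat \<times> bool \<Rightarrow> bool" where
  "reasonable_in n m i = (\<lambda>(r, g, c, rs). in_epoch n m i r \<and> rs)"

definition valid_config :: "nat \<Rightarrow> nat \<Rightarrow> nat \<Rightarrow> config \<Rightarrow> bool" where
  "valid_config n m t = (\<lambda>(D, B, s, h). finite D \<and> finite B \<and> card B \<le> uu n m \<and> length h = t)"

lemma step_eq: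
  "step n m G T (D, B, s, h) = do {
     c \<leftarrow> pmf_of_set (draw_pool n m D B);
     g \<leftarrow> G s;
     s' \<leftarrow> T s c;
     return_pmf (D - {c},
       (if epoch_turn n m (card D) \<and> g \<in> D - {c} \<and> card (current_B n m D B) < uu n m
        then insert g (current_B n m D B) else current_B n m D B),
       s', h @ [(card D, g, c, epoch_turn n m (card D) \<and> g \<in> D - current_B n m D B)])
   }"
  unfolding step_def Let_def current_B_def draw_pool_def by simp

lemma hist_count_snoc:
  "hist_count P (D', B', s', h @ [e]) = hist_count P (D, B, s, h) + of_bool (P e)"
  by (simp add: hist_count_def)

lemma nn_integral_step_hist_count:
  "(\<integral>\<^sup>+y. hist_count P y \<partial>step n m G T x) = hist_count P x + next_entry_prob n m G P x"
proof (cases x)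
  case (fields D B s h)
  then show ?thesis
    unfolding next_entry_prob_def
    by (simp add: step_eq hist_count_snoc[where D = D and B = B and s = s] nn_integral_add
        measure_pmf.emeasure_space_1 nn_integral_const)
qed

text \<open>No nonemptiness of the pool is needed: even where \<open>pmf_of_set\<close> is applied to the empty
  set (an unspecified distribution), every outcome of a step has the stated shape.\<close>

lemma valid_config_step:
  assumes "valid_config n m t x" "y \<in> set_pmf (step n m G T x)"
  shows "valid_config n m (Suc t) y"
  using assms unfolding step_def Let_def valid_config_def
  by (auto split: prod.splits simp: card_insert_if)

lemma correct_le_reasonable_next_entry:
  assumes "finite D" "finite B" "card B \<le> uu n m"
  shows "ennreal (real (kk n m i) - real (ell n m) - real (uu n m))
           * next_entry_prob n m G (correct_in n m i) (D, B, s, h)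
         \<le> next_entry_prob n m G (reasonable_in n m i) (D, B, s, h)"
proof (cases "in_epoch n m i (card D)")
  case False
  then show ?thesis by (simp add: next_entry_prob_def correct_in_def)
next
  case True
  define S where "S = D - current_B n m D B"
  have "epoch_turn n m (card D)" using True unfolding epoch_turn_def by blast
  then have pool: "draw_pool n m D B = S" unfolding draw_pool_def S_def by simp
  have "3 * ell n m \<le> kk n m i" "kk n m i - ell n m < card D"
    using True three_ell_le_kk unfolding in_epoch_def by auto
  moreover have "card D - card (current_B n m D B) \<le> card S"
    unfolding S_def using assms by (intro diff_card_le_card_Diff) (simp add: current_B_def)
  moreover have "card (current_B n m D B) \<le> uu n m"
    using assms by (simp add: current_B_def)
  ultimately have S_large: "real (kk n m i) - real (ell n m) - real (uu n m) < real (card S)"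
    unfolding uu_def by linarith
  then have "S \<noteq> {}" using \<open>3 * ell n m \<le> kk n m i\<close> unfolding uu_def by auto
  have "(\<integral>\<^sup>+g. of_bool (g = c) \<partial>G s) = pmf (G s) c" for c
    using nn_integral_indicator[of "{c}" "G s"] by (simp add: indicator_def emeasure_pmf_single)
  then have correct: "next_entry_prob n m G (correct_in n m i) (D, B, s, h)
      = (\<integral>\<^sup>+c. pmf (G s) c \<partial>pmf_of_set S)"
    using True by (simp add: next_entry_prob_def correct_in_def pool)
  have "(\<integral>\<^sup>+g. of_bool (g \<in> S) \<partial>G s) = emeasure (measure_pmf (G s)) S"
    using nn_integral_indicator[of S "G s"] by (simp add: indicator_def)
  then have reasonable: "next_entry_prob n m G (reasonable_in n m i) (D, B, s, h)
      = emeasure (measure_pmf (G s)) S"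
    using True \<open>epoch_turn n m (card D)\<close>
    by (simp add: next_entry_prob_def reasonable_in_def pool S_def measure_pmf.emeasure_space_1)
  have K_le: "ennreal (real (kk n m i) - real (ell n m) - real (uu n m)) \<le> of_nat (card S)"
    using S_large by (simp add: ennreal_of_nat_eq_real_of_nat ennreal_leI)
  have "ennreal (real (kk n m i) - real (ell n m) - real (uu n m))
        * (\<integral>\<^sup>+c. pmf (G s) c \<partial>pmf_of_set S)
      \<le> of_nat (card S) * (\<integral>\<^sup>+c. pmf (G s) c \<partial>pmf_of_set S)"
    by (rule mult_right_mono[OF K_le]) simp
  also have "\<dots> = emeasure (measure_pmf (G s)) S"
    using \<open>finite D\<close> \<open>S \<noteq> {}\<close> by (simp add: card_mult_nn_integral_pmf_pmf_of_set S_def)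
  finally show ?thesis unfolding correct reasonable .
qed

lemma valid_config_reachable:
  "x \<in> set_pmf (((\<lambda>q. bind_pmf q (step n m G T)) ^^ t) (return_pmf ({1..n}, {}, s0, [])))
     \<Longrightarrow> valid_config n m t x"
  by (rule set_pmf_funpow_bind_pmf_invariant[where I = "valid_config n m", OF _ valid_config_step])
    (simp_all add: valid_config_def)

lemma game_correct_le_reasonable:
  "ennreal (real (kk n m i) - real (ell n m) - real (uu n m))
       * (\<integral>\<^sup>+x. hist_count (correct_in n m i) x \<partial>game n m G T s0)
     \<le> (\<integral>\<^sup>+x. hist_count (reasonable_in n m i) x \<partial>game n m G T s0)"
  unfolding game_def
proof (rule nn_integral_funpow_bind_pmf_cmult_le[OF nn_integral_step_hist_count nn_integral_step_hist_count])
  fix t x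
  assume "x \<in> set_pmf (((\<lambda>q. bind_pmf q (step n m G T)) ^^ t) (return_pmf ({1..n}, {}, s0, [])))"
  then have "valid_config n m t x" by (rule valid_config_reachable)
  then show "ennreal (real (kk n m i) - real (ell n m) - real (uu n m))
               * next_entry_prob n m G (correct_in n m i) x
             \<le> next_entry_prob n m G (reasonable_in n m i) x"
    by (cases x) (auto simp: valid_config_def intro: correct_le_reasonable_next_entry)
qed (simp add: hist_count_def)

lemma game_hist_count_le: "(\<integral>\<^sup>+x. hist_count P x \<partial>game n m G T s0) \<le> of_nat n"
proof -
  have "hist_count P x \<le> of_nat n" if "x \<in> set_pmf (game n m G T s0)" for x
  proof -
    from that have "valid_config n m n x" unfolding game_def by (rule valid_config_reachable)
    then show ?thesis
      by (cases x) (auto simp: valid_config_def hist_count_def intro: order_trans[OF length_filter_le])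
  qed
  then have "(\<integral>\<^sup>+x. hist_count P x \<partial>game n m G T s0) \<le> (\<integral>\<^sup>+x. of_nat n \<partial>game n m G T s0)"
    by (intro nn_integral_mono_AE) (simp add: AE_measure_pmf_iff)
  then show ?thesis by (simp add: measure_pmf.emeasure_space_1)
qed

lemma expectation_hist_count:
  "measure_pmf.expectation p (\<lambda>(D, B, s, h). real (length (filter P h)))
     = enn2real (\<integral>\<^sup>+x. hist_count P x \<partial>p)"
  unfolding hist_count_def
  by (subst integral_eq_nn_integral)
    (auto intro!: arg_cong[where f = enn2real] nn_integral_cong
      simp: ennreal_of_nat_eq_real_of_nat split: prod.splits)

theorem mainTheorem11:
  fixes n m i :: nat
    and G :: "bool list \<Rightarrow> nat pmf"
    and T :: "bool list \<Rightarrow> nat \<Rightarrow> bool list pmf"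
    and s0 :: "bool list"
  assumes "1 \<le> m"
    and "real m \<le> real n / (log 2 (real n))^2"
    and "length s0 = m"
    and "\<And>s. length s = m \<Longrightarrow> set_pmf (G s) \<subseteq> {1..n}"
    and "\<And>s c. length s = m \<Longrightarrow> set_pmf (T s c) \<subseteq> {s'. length s' = m}"
    and "1 \<le> i" and "i \<le> dd n m"
  shows "correct_exp n m G T s0 i
           \<le> reasonable_exp n m G T s0 i / (real (kk n m i) - real (ell n m) - real (uu n m))"
proof -
  define K where "K = real (kk n m i) - real (ell n m) - real (uu n m)"
  have "0 < K"
    using ell_pos[of n m] three_ell_le_kk[OF assms(6,7)] assms(6,7) unfolding K_def uu_def by linarith
  let ?C = "\<integral>\<^sup>+x. hist_count (correct_in n m i) x \<partial>game n m G T s0"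
  let ?R = "\<integral>\<^sup>+x. hist_count (reasonable_in n m i) x \<partial>game n m G T s0"
  have "ennreal K * ?C \<le> ?R"
    unfolding K_def by (rule game_correct_le_reasonable)
  moreover have "?R < top"
    using game_hist_count_le of_nat_less_top by (rule order_le_less_trans)
  ultimately have "K * enn2real ?C \<le> enn2real ?R"
    using \<open>0 < K\<close> by (metis enn2real_mono enn2real_mult enn2real_ennreal less_le)
  moreover have "correct_exp n m G T s0 i = enn2real ?C"
    unfolding correct_exp_def correct_in_def by (rule expectation_hist_count)
  moreover have "reasonable_exp n m G T s0 i = enn2real ?R"
    unfolding reasonable_exp_def reasonable_in_def by (rule expectation_hist_count)
  ultimately show ?thesis
    using \<open>0 < K\<close> unfolding K_def by (simp add: le_divide_eq mult.commute)
qed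

end
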